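(* Let $k\ge2$ and $m\ge1$ be integers and $n=km$. Let $F_k$ be the cumulative distribution function $F_k(x)=\left(\frac nk x\right)^{\frac1{k-1}}$ for $x\in[0,\frac kn]$ and $F_k(x)=1$ for $x\in(\frac kn,1]$. Then there exists a probability distribution of a random vector $(b_1,\dots,b_n)$ such that $\sum_{i=1}^n b_i=1$ and each $b_i$ has distribution $F_k$. *)

theory Defs
  imports "HOL-Probability.Probability"
begin

definition Fk :: "nat \<Rightarrow> nat \<Rightarrow> real \<Rightarrow> real" where
  "Fk k m x = (if x < 0 then 0
     else if x \<le> real k / real (k * m) then (real (k * m) / real k * x) powr (1 / (real k - 1))
     else 1)"

end

theory Submission
  imports Defs
begin

(* Let a = 1 / (k - 1). Give k coordinates the sigma-finite density t^(a - 1) on (0, infinity)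
   each, restrict the product measure to the simplex x > 0, x_1 + ... + x_k <= 1 and normalise.
   The shares x_j / (x_1 + ... + x_k) then sum to 1 and each is Beta(a, (k - 1) a) = Beta(a, 1)
   distributed, with distribution function y^a on [0, 1]. Repeating the k shares m times and
   dividing by m gives n = k m variables summing to 1, each with distribution function
   (m y)^a = F_k(y).
   The marginal law is computed with Dirichlet's integral: integrating out the other k - 1
   coordinates leaves their sum s with density proportional to s^((k - 1) a - 1) = 1, so only an
   explicit integral over the remaining coordinate and s is left. *)

definition powr_measure :: "real \<Rightarrow> real measure" where
  "powr_measure a = density lborel (\<lambda>t. ennreal (indicator {0<..} t * t powr (a - 1)))"

lemma sets_powr_measure [simp, measurable_cong]: "sets (powr_measure a) = sets borel"
  by (simp add: powr_measure_def)

lemma space_powr_measure [simp]: "space (powr_measure a) = UNIV"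
  by (simp add: powr_measure_def)

lemma sets_PiM_powr_measure: "sets (PiM I (\<lambda>_. powr_measure a)) = sets (PiM I (\<lambda>_. borel))"
  by (intro sets_PiM_cong) simp_all

lemma product_sigma_finite_powr_measure: "product_sigma_finite (\<lambda>_. powr_measure a)"
  unfolding product_sigma_finite_def powr_measure_def
  by (subst sigma_finite_measure.sigma_finite_iff_density_finite[OF sigma_finite_lborel]) auto

lemma nn_integral_powr_measure:
  assumes [measurable]: "f \<in> borel_measurable borel"
  shows "(\<integral>\<^sup>+t. f t \<partial>powr_measure a)
    = (\<integral>\<^sup>+t. ennreal (indicator {0<..} t * t powr (a - 1)) * f t \<partial>lborel)"
  unfolding powr_measure_def by (subst nn_integral_density) auto

lemma nn_integral_powr_convolution:
  fixes a b z :: real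
  assumes "a > 0" "b > 0" "z > 0"
  shows "(\<integral>\<^sup>+s. ennreal (indicator {0<..} s * s powr (b - 1) *
              (indicator {0<..} (z - s) * (z - s) powr (a - 1))) \<partial>lborel)
    = ennreal (z powr (a + b - 1) * Beta b a)"
proof -
  define h where
    "h s = indicator {0<..} s * s powr (b - 1) * (indicator {0<..} (z - s) * (z - s) powr (a - 1))"
    for s
  define B where "B t = indicator {0..1} t * (t powr (b - 1) * (1 - t) powr (a - 1))" for t :: real
  have scale: "z * h (z * t) = z powr (a + b - 1) * B t" for t
  proof (cases "0 < t \<and> t < 1")
    case True
    have "z - z * t = z * (1 - t)" by algebra
    with True \<open>z > 0\<close> have "z * h (z * t)
        = (z powr 1 * z powr (b - 1) * z powr (a - 1)) * (t powr (b - 1) * (1 - t) powr (a - 1))"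
      by (simp add: h_def powr_mult)
    also have "z powr 1 * z powr (b - 1) * z powr (a - 1) = z powr (a + b - 1)"
      by (simp only: powr_add[symmetric]) (simp add: algebra_simps)
    finally show ?thesis using True by (simp add: B_def)
  next
    case False
    with \<open>z > 0\<close> show ?thesis
      by (auto simp: h_def B_def indicator_def zero_less_mult_iff mult_less_cancel_left1 not_less)
  qed
  have "(\<integral>\<^sup>+s. ennreal (h s) \<partial>lborel) = (\<integral>\<^sup>+t. ennreal (h (z * t)) \<partial>distr lborel borel ((*) (1/z)))"
    using \<open>z > 0\<close> by (subst nn_integral_distr) (auto simp: h_def)
  also have "\<dots> = (\<integral>\<^sup>+t. ennreal z * ennreal (h (z * t)) \<partial>lborel)"
    using \<open>z > 0\<close> by (simp add: lborel_distr_mult nn_integral_density h_def)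
  also have "\<dots> = (\<integral>\<^sup>+t. ennreal (z powr (a + b - 1)) * ennreal (B t) \<partial>lborel)"
    using \<open>z > 0\<close> by (simp add: scale ennreal_mult'[symmetric])
  also have "\<dots> = ennreal (z powr (a + b - 1)) * ennreal (Beta b a)"
    using nn_integral_has_integral_lebesgue[OF _ has_integral_Beta_real[OF \<open>b > 0\<close> \<open>a > 0\<close>]]
    by (subst nn_integral_cmult) (auto simp: B_def)
  finally show ?thesis by (simp add: h_def ennreal_mult'[symmetric])
qed

lemma nn_integral_powr_convolution_shift:
  fixes a b :: real and f :: "real \<Rightarrow> ennreal"
  assumes "a > 0" "b > 0" and [measurable]: "f \<in> borel_measurable borel"
  shows "(\<integral>\<^sup>+s. ennreal (indicator {0<..} s * s powr (b - 1)) *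
             (\<integral>\<^sup>+y. ennreal (indicator {0<..} y * y powr (a - 1)) * f (y + s) \<partial>lborel) \<partial>lborel)
    = ennreal (Beta b a) *
      (\<integral>\<^sup>+z. ennreal (indicator {0<..} z * z powr (a + b - 1)) * f z \<partial>lborel)"
proof -
  define p where "p c t = indicator {0<..} t * t powr (c - 1)" for c t :: real
  have shift: "(\<integral>\<^sup>+y. ennreal (p a y) * f (y + s) \<partial>lborel)
      = (\<integral>\<^sup>+z. ennreal (p a (z - s)) * f z \<partial>lborel)" for s
    by (subst lborel_distr_plus[of s, symmetric], subst nn_integral_distr)
       (auto simp: p_def add.commute)
  have inner: "(\<integral>\<^sup>+s. ennreal (p b s * p a (z - s)) \<partial>lborel) = ennreal (Beta b a * p (a + b) z)"
    for z
  proof (cases "z > 0")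
    case True
    then show ?thesis
      using nn_integral_powr_convolution[OF assms(1,2) True] by (simp add: p_def mult_ac)
  next
    case False
    then show ?thesis
      by (auto intro!: nn_integral_zero' simp: p_def indicator_def)
  qed
  have p_nonneg: "p c t \<ge> 0" for c t
    by (simp add: p_def)
  have [measurable]: "p c \<in> borel_measurable borel" for c
    unfolding p_def by measurable
  have "(\<integral>\<^sup>+s. ennreal (p b s) * (\<integral>\<^sup>+y. ennreal (p a y) * f (y + s) \<partial>lborel) \<partial>lborel)
      = (\<integral>\<^sup>+s. \<integral>\<^sup>+z. ennreal (p b s) * (ennreal (p a (z - s)) * f z) \<partial>lborel \<partial>lborel)"
    by (simp add: shift nn_integral_cmult)
  also have "\<dots> = (\<integral>\<^sup>+s. \<integral>\<^sup>+z. ennreal (p b s * p a (z - s)) * f z \<partial>lborel \<partial>lborel)"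
    by (simp add: ennreal_mult p_nonneg mult.assoc)
  also have "\<dots> = (\<integral>\<^sup>+z. \<integral>\<^sup>+s. ennreal (p b s * p a (z - s)) * f z \<partial>lborel \<partial>lborel)"
    by (subst lborel_pair.Fubini') (auto simp: case_prod_unfold)
  also have "\<dots> = (\<integral>\<^sup>+z. ennreal (Beta b a) * (ennreal (p (a + b) z) * f z) \<partial>lborel)"
  proof (intro nn_integral_cong)
    fix z
    have "Beta b a \<ge> 0"
      using \<open>a > 0\<close> \<open>b > 0\<close> by (simp add: Beta_def)
    have "(\<integral>\<^sup>+s. ennreal (p b s * p a (z - s)) * f z \<partial>lborel)
        = ennreal (Beta b a * p (a + b) z) * f z"
      by (subst nn_integral_multc) (simp_all only: inner, measurable)
    also have "\<dots> = ennreal (Beta b a) * (ennreal (p (a + b) z) * f z)"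
      using \<open>Beta b a \<ge> 0\<close> by (simp add: ennreal_mult p_nonneg mult.assoc)
    finally show "(\<integral>\<^sup>+s. ennreal (p b s * p a (z - s)) * f z \<partial>lborel) = \<dots>" .
  qed
  also have "\<dots> = ennreal (Beta b a) * (\<integral>\<^sup>+z. ennreal (p (a + b) z) * f z \<partial>lborel)"
    by (subst nn_integral_cmult) auto
  finally show ?thesis by (simp add: p_def)
qed

lemma nn_integral_PiM_powr_measure_insert:
  fixes a :: real and f :: "real \<Rightarrow> ennreal"
  assumes "finite I" "i \<notin> I" and [measurable]: "f \<in> borel_measurable borel"
  defines "g \<equiv> \<lambda>s. \<integral>\<^sup>+y. ennreal (indicator {0<..} y * y powr (a - 1)) * f (y + s) \<partial>lborel"
  shows "(\<integral>\<^sup>+r. (if \<forall>j\<in>insert i I. 0 < r j then f (\<Sum>j\<in>insert i I. r j) else 0)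
        \<partial>PiM (insert i I) (\<lambda>_. powr_measure a))
    = (\<integral>\<^sup>+x. (if \<forall>j\<in>I. 0 < x j then g (\<Sum>j\<in>I. x j) else 0) \<partial>PiM I (\<lambda>_. powr_measure a))"
proof -
  interpret product_sigma_finite "\<lambda>_. powr_measure a"
    by (rule product_sigma_finite_powr_measure)
  have split_off_i: "(\<integral>\<^sup>+y. (if \<forall>j\<in>insert i I. 0 < (x(i := y)) j
        then f (\<Sum>j\<in>insert i I. (x(i := y)) j) else 0) \<partial>powr_measure a)
      = (if \<forall>j\<in>I. 0 < x j then g (\<Sum>j\<in>I. x j) else 0)" for x
  proof -
    have sum_upd: "(\<Sum>j\<in>insert i I. (x(i := y)) j) = y + (\<Sum>j\<in>I. x j)" for y
      using assms by simp (intro sum.cong, auto)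
    have pos_upd: "(\<forall>j\<in>insert i I. 0 < (x(i := y)) j) \<longleftrightarrow> 0 < y \<and> (\<forall>j\<in>I. 0 < x j)" for y
      using assms by auto
    show ?thesis
    proof (cases "\<forall>j\<in>I. 0 < x j")
      case True
      then show ?thesis
        unfolding sum_upd pos_upd g_def
        by (subst nn_integral_powr_measure) (auto intro!: nn_integral_cong simp: indicator_def)
    next
      case False
      then have not_pos: "(\<forall>j\<in>I. 0 < x j) = False"
        by blast
      show ?thesis
        unfolding sum_upd pos_upd not_pos by simp
    qed
  qed
  show ?thesis
    using assms by (subst product_nn_integral_insert) (simp_all only: split_off_i, auto)
qed

lemma nn_integral_PiM_powr_measure_sum:
  fixes a :: real and I :: "'i set" and f :: "real \<Rightarrow> ennreal"
  assumes "a > 0" and "finite I" and "I \<noteq> {}" and "f \<in> borel_measurable borel"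
  shows "(\<integral>\<^sup>+r. (if \<forall>i\<in>I. 0 < r i then f (\<Sum>i\<in>I. r i) else 0) \<partial>PiM I (\<lambda>_. powr_measure a))
     = ennreal (Gamma a ^ card I / Gamma (real (card I) * a)) *
       (\<integral>\<^sup>+s. ennreal (indicator {0<..} s * s powr (real (card I) * a - 1)) * f s \<partial>lborel)"
  using \<open>finite I\<close> \<open>I \<noteq> {}\<close> \<open>f \<in> borel_measurable borel\<close>
proof (induction I arbitrary: f rule: finite_ne_induct)
  case (singleton i)
  interpret product_sigma_finite "\<lambda>_. powr_measure a"
    by (rule product_sigma_finite_powr_measure)
  note [measurable] = singleton.prems
  have "Gamma a \<noteq> 0"
    using Gamma_real_pos[OF \<open>a > 0\<close>] by simp
  then show ?case
    using product_nn_integral_singleton[of "\<lambda>t. if 0 < t then f t else 0" i]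
    by (simp add: nn_integral_powr_measure cong: if_cong)
       (auto intro!: nn_integral_cong simp: indicator_def)
next
  case (insert i I)
  note [measurable] = insert.prems
  define b where "b = real (card I) * a"
  have "b > 0"
    using insert \<open>a > 0\<close> by (simp add: b_def card_gt_0_iff)
  define g where "g s = (\<integral>\<^sup>+y. ennreal (indicator {0<..} y * y powr (a - 1)) * f (y + s) \<partial>lborel)"
    for s
  have [measurable]: "g \<in> borel_measurable borel"
    unfolding g_def by measurable
  have "(\<integral>\<^sup>+r. (if \<forall>j\<in>insert i I. 0 < r j then f (\<Sum>j\<in>insert i I. r j) else 0)
        \<partial>PiM (insert i I) (\<lambda>_. powr_measure a))
      = (\<integral>\<^sup>+x. (if \<forall>j\<in>I. 0 < x j then g (\<Sum>j\<in>I. x j) else 0) \<partial>PiM I (\<lambda>_. powr_measure a))"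
    unfolding g_def using insert.hyps by (intro nn_integral_PiM_powr_measure_insert) simp_all
  also have "\<dots> = ennreal (Gamma a ^ card I / Gamma b) *
      (\<integral>\<^sup>+s. ennreal (indicator {0<..} s * s powr (b - 1)) * g s \<partial>lborel)"
    using insert.IH[of g] by (simp add: b_def)
  also have "\<dots> = ennreal (Gamma a ^ card I / Gamma b) *
      (ennreal (Beta b a) *
       (\<integral>\<^sup>+z. ennreal (indicator {0<..} z * z powr (a + b - 1)) * f z \<partial>lborel))"
    unfolding g_def using \<open>a > 0\<close> \<open>b > 0\<close> by (subst nn_integral_powr_convolution_shift) auto
  also have "\<dots> = ennreal (Gamma a ^ card (insert i I) / Gamma (real (card (insert i I)) * a)) *
      (\<integral>\<^sup>+s. ennreal (indicator {0<..} s * s powr (real (card (insert i I)) * a - 1)) * f s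
        \<partial>lborel)"
  proof -
    have card_a: "real (card (insert i I)) * a = a + b"
      using insert by (simp add: b_def algebra_simps)
    have const:
      "Gamma a ^ card I / Gamma b * Beta b a = Gamma a ^ card (insert i I) / Gamma (a + b)"
      using insert Gamma_real_pos[OF \<open>b > 0\<close>] by (simp add: Beta_def add.commute)
    have "Gamma a ^ card I / Gamma b \<ge> 0" "Beta b a \<ge> 0"
      using \<open>a > 0\<close> \<open>b > 0\<close> Gamma_real_pos[of a] Gamma_real_pos[of b] Gamma_real_pos[of "b + a"]
      by (simp_all add: Beta_def)
    then show ?thesis
      unfolding card_a const[symmetric] by (simp only: ennreal_mult mult.assoc add.commute)
  qed
  finally show ?case .
qed

lemma emeasure_lborel_share_slice:
  fixes u y :: real
  assumes "u > 0" "y > 0" "y \<le> 1"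
  shows "emeasure lborel {s. 0 < s \<and> u + s \<le> 1 \<and> u \<le> y * (u + s)} = ennreal (1 - u / y)"
proof -
  define l where "l = u * (1 - y) / y"
  define S where "S = {s. 0 < s \<and> u + s \<le> 1 \<and> u \<le> y * (u + s)}"
  have "l \<ge> 0"
    using assms by (simp add: l_def)
  have share_iff: "u \<le> y * (u + s) \<longleftrightarrow> l \<le> s" for s
    using \<open>y > 0\<close> by (simp add: l_def field_simps)
  have "{l<..1 - u} \<subseteq> S" "S \<subseteq> {l..1 - u}"
    using \<open>l \<ge> 0\<close> by (auto simp: S_def share_iff)
  moreover have "S \<in> sets borel"
    unfolding S_def by measurable
  ultimately have "emeasure lborel {l<..1 - u} \<le> emeasure lborel S"
    "emeasure lborel S \<le> emeasure lborel {l..1 - u}"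
    by (auto intro!: emeasure_mono)
  moreover have "1 - u - l = 1 - u / y"
    using \<open>y > 0\<close> by (simp add: l_def field_simps)
  ultimately show ?thesis
    unfolding S_def[symmetric] by (cases "l \<le> 1 - u") (auto simp: ennreal_neg)
qed

lemma nn_integral_powr_minus_powr_div:
  fixes a y :: real
  assumes "a > 0" "y > 0"
  shows "(\<integral>\<^sup>+u. ennreal (indicator {0..y} u * (u powr (a - 1) - u powr a / y)) \<partial>lborel)
    = ennreal (y powr a / (a * (a + 1)))"
proof -
  have "(\<integral>\<^sup>+u. ennreal (indicator {0..y} u * (u powr (a - 1) - u powr a / y)) \<partial>lborel)
      = ennreal (y powr (a - 1 + 1) / (a - 1 + 1) - (y powr (a + 1) / (a + 1)) / y)"
  proof (rule nn_integral_has_integral_lebesgue)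
    show "0 \<le> u powr (a - 1) - u powr a / y" if "u \<in> {0..y}" for u
    proof -
      have "u * u powr (a - 1) \<le> y * u powr (a - 1)"
        using that by (intro mult_right_mono) auto
      then show ?thesis
        using that \<open>y > 0\<close> powr_mult_base[of u "a - 1"] by (simp add: field_simps)
    qed
    show "((\<lambda>u. u powr (a - 1) - u powr a / y) has_integral
           y powr (a - 1 + 1) / (a - 1 + 1) - y powr (a + 1) / (a + 1) / y) {0..y}"
      using \<open>a > 0\<close> \<open>y > 0\<close>
      by (intro has_integral_diff has_integral_powr_from_0 has_integral_divide) auto
  qed
  also have "y powr (a - 1 + 1) / (a - 1 + 1) - (y powr (a + 1) / (a + 1)) / y
      = y powr a / (a * (a + 1))"
  proof -
    have "y powr (a + 1) / (a + 1) / y = y powr a / (a + 1)"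
      using \<open>y > 0\<close> by (simp add: powr_add)
    moreover have "y powr a / a - y powr a / (a + 1) = y powr a / (a * (a + 1))"
      using \<open>a > 0\<close> by (simp add: field_simps)
    ultimately show ?thesis
      by simp
  qed
  finally show ?thesis .
qed

lemma nn_integral_powr_share_le:
  fixes a y :: real
  assumes "a > 0" "0 \<le> y" "y \<le> 1"
  shows "(\<integral>\<^sup>+s. ennreal (indicator {0<..} s) *
            (\<integral>\<^sup>+u. ennreal (indicator {0<..} u * u powr (a - 1)) *
                 indicator {u. u + s \<le> 1 \<and> u \<le> y * (u + s)} u \<partial>lborel) \<partial>lborel)
         = ennreal (y powr a / (a * (a + 1)))"
proof (cases "y = 0")
  case True
  then have "(\<integral>\<^sup>+u. ennreal (indicator {0<..} u * u powr (a - 1)) *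
                 indicator {u. u + s \<le> 1 \<and> u \<le> y * (u + s)} u \<partial>lborel) = 0" for s
    by (intro nn_integral_zero' AE_I2) (auto simp: indicator_def)
  with True show ?thesis
    by simp
next
  case False
  with \<open>0 \<le> y\<close> have "y > 0" by simp
  have slice: "ennreal (indicator {0<..} u * u powr (a - 1)) *
      emeasure lborel {s. 0 < s \<and> u + s \<le> 1 \<and> u \<le> y * (u + s)}
      = ennreal (indicator {0..y} u * (u powr (a - 1) - u powr a / y))" for u
  proof (cases "u > 0")
    case True
    have "u powr a = u * u powr (a - 1)"
      using True powr_mult_base[of u "a - 1"] by simp
    then have "ennreal (u powr (a - 1)) * ennreal (1 - u / y)
        = ennreal (indicator {0..y} u * (u powr (a - 1) - u powr a / y))"
      using True \<open>y > 0\<close>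
      by (cases "u \<le> y") (auto simp: indicator_def ennreal_mult'[symmetric] ennreal_neg field_simps)
    then show ?thesis
      using True \<open>y > 0\<close> \<open>y \<le> 1\<close> by (simp add: emeasure_lborel_share_slice)
  next
    case False
    then show ?thesis
      by (cases "u = 0") (auto simp: indicator_def)
  qed
  have "(\<integral>\<^sup>+s. ennreal (indicator {0<..} s) *
            (\<integral>\<^sup>+u. ennreal (indicator {0<..} u * u powr (a - 1)) *
                 indicator {u. u + s \<le> 1 \<and> u \<le> y * (u + s)} u \<partial>lborel) \<partial>lborel)
      = (\<integral>\<^sup>+s. \<integral>\<^sup>+u. ennreal (indicator {0<..} u * u powr (a - 1)) *
                 indicator {s. 0 < s \<and> u + s \<le> 1 \<and> u \<le> y * (u + s)} s \<partial>lborel \<partial>lborel)"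
    by (subst nn_integral_cmult[symmetric]) (auto intro!: nn_integral_cong simp: indicator_def)
  also have "\<dots> = (\<integral>\<^sup>+u. \<integral>\<^sup>+s. ennreal (indicator {0<..} u * u powr (a - 1)) *
                 indicator {s. 0 < s \<and> u + s \<le> 1 \<and> u \<le> y * (u + s)} s \<partial>lborel \<partial>lborel)"
    by (subst lborel_pair.Fubini') (auto simp: case_prod_unfold)
  also have "\<dots> = (\<integral>\<^sup>+u. ennreal (indicator {0..y} u * (u powr (a - 1) - u powr a / y)) \<partial>lborel)"
    by (subst nn_integral_cmult) (auto simp: slice)
  also have "\<dots> = ennreal (y powr a / (a * (a + 1)))"
    using \<open>a > 0\<close> \<open>y > 0\<close> by (rule nn_integral_powr_minus_powr_div)
  finally show ?thesis .
qed

(* Extensional on {..<k}, so that it is a subset of the space of the product measure. *)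
definition positive_simplex :: "nat \<Rightarrow> (nat \<Rightarrow> real) set" where
  "positive_simplex k = {x \<in> {..<k} \<rightarrow>\<^sub>E UNIV. (\<forall>i<k. 0 < x i) \<and> (\<Sum>i<k. x i) \<le> 1}"

lemma positive_simplex_in_sets: "positive_simplex k \<in> sets (PiM {..<k} (\<lambda>_. borel))"
proof -
  have "positive_simplex k =
      {x \<in> space (PiM {..<k} (\<lambda>_. borel)). (\<forall>i\<in>{..<k}. 0 < x i) \<and> (\<Sum>i<k. x i) \<le> 1}"
    by (auto simp: positive_simplex_def space_PiM)
  also have "\<dots> \<in> sets (PiM {..<k} (\<lambda>_. borel))"
    by measurable
  finally show ?thesis .
qed

lemma positive_simplex_share_le_in_sets:
  assumes "j < k"
  shows "{x \<in> positive_simplex k. x j \<le> y * (\<Sum>i<k. x i)} \<in> sets (PiM {..<k} (\<lambda>_. borel))"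
proof -
  have [measurable]: "(\<lambda>x. x j) \<in> borel_measurable (PiM {..<k} (\<lambda>_. (borel :: real measure)))"
    using assms by (simp add: measurable_component_singleton)
  have "{x \<in> space (PiM {..<k} (\<lambda>_. borel)). x j \<le> y * (\<Sum>i<k. x i)}
      \<in> sets (PiM {..<k} (\<lambda>_. borel))"
    by (rule borel_measurable_le) measurable
  with positive_simplex_in_sets
  have "positive_simplex k \<inter> {x \<in> space (PiM {..<k} (\<lambda>_. borel)). x j \<le> y * (\<Sum>i<k. x i)}
      \<in> sets (PiM {..<k} (\<lambda>_. borel))"
    by (rule sets.Int)
  also have "positive_simplex k \<inter> {x \<in> space (PiM {..<k} (\<lambda>_. borel)). x j \<le> y * (\<Sum>i<k. x i)}
      = {x \<in> positive_simplex k. x j \<le> y * (\<Sum>i<k. x i)}"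
    by (auto simp: positive_simplex_def space_PiM)
  finally show ?thesis .
qed

lemma emeasure_positive_simplex_share_le_split:
  fixes k j :: nat and a y :: real
  assumes "j < k"
  defines "I \<equiv> {..<k} - {j}"
    and "G \<equiv> \<lambda>s. \<integral>\<^sup>+u. ennreal (indicator {0<..} u * u powr (a - 1)) *
                   indicator {u. u + s \<le> 1 \<and> u \<le> y * (u + s)} u \<partial>lborel"
  shows "emeasure (PiM {..<k} (\<lambda>_. powr_measure a)) {x \<in> positive_simplex k. x j \<le> y * (\<Sum>i<k. x i)}
    = (\<integral>\<^sup>+r. (if \<forall>i\<in>I. 0 < r i then G (\<Sum>i\<in>I. r i) else 0) \<partial>PiM I (\<lambda>_. powr_measure a))"
proof -
  interpret product_sigma_finite "\<lambda>_. powr_measure a"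
    by (rule product_sigma_finite_powr_measure)
  have "finite I" "j \<notin> I" and k_eq: "{..<k} = insert j I"
    using \<open>j < k\<close> by (auto simp: I_def)
  define A where "A = {x \<in> positive_simplex k. x j \<le> y * (\<Sum>i<k. x i)}"
  have "A \<in> sets (PiM (insert j I) (\<lambda>_. powr_measure a))"
    using positive_simplex_share_le_in_sets[OF \<open>j < k\<close>] unfolding A_def k_eq
    by (simp add: sets_PiM_powr_measure)
  then have "emeasure (PiM (insert j I) (\<lambda>_. powr_measure a)) A
      = (\<integral>\<^sup>+r. \<integral>\<^sup>+u. indicator A (r(j := u)) \<partial>powr_measure a \<partial>PiM I (\<lambda>_. powr_measure a))"
    using \<open>finite I\<close> \<open>j \<notin> I\<close> by (simp add: product_nn_integral_insert flip: nn_integral_indicator)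
  also have "\<dots> = (\<integral>\<^sup>+r. (if \<forall>i\<in>I. 0 < r i then G (\<Sum>i\<in>I. r i) else 0) \<partial>PiM I (\<lambda>_. powr_measure a))"
  proof (intro nn_integral_cong)
    fix r assume "r \<in> space (PiM I (\<lambda>_. powr_measure a))"
    then have "r(j := u) \<in> {..<k} \<rightarrow>\<^sub>E UNIV" for u
      unfolding k_eq by (intro PiE_fun_upd) (auto simp: space_PiM)
    moreover have "(\<Sum>i<k. (r(j := u)) i) = u + (\<Sum>i\<in>I. r i)" for u
      using \<open>finite I\<close> \<open>j \<notin> I\<close> by (simp add: k_eq) (intro sum.cong, auto)
    moreover have "(\<forall>i<k. 0 < (r(j := u)) i) \<longleftrightarrow> 0 < u \<and> (\<forall>i\<in>I. 0 < r i)" for u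
      using \<open>j \<notin> I\<close> k_eq by auto
    ultimately have slice: "indicator A (r(j := u)) = (if \<forall>i\<in>I. 0 < r i
        then indicator {0<..} u * indicator {u. u + (\<Sum>i\<in>I. r i) \<le> 1 \<and> u \<le> y * (u + (\<Sum>i\<in>I. r i))} u
        else (0 :: ennreal))" for u
      by (simp add: A_def positive_simplex_def indicator_def)
    show "(\<integral>\<^sup>+u. indicator A (r(j := u)) \<partial>powr_measure a)
        = (if \<forall>i\<in>I. 0 < r i then G (\<Sum>i\<in>I. r i) else 0)"
    proof (cases "\<forall>i\<in>I. 0 < r i")
      case True
      then show ?thesis
        unfolding slice if_P[OF True] G_def
        by (subst nn_integral_powr_measure) (auto intro!: nn_integral_cong simp: indicator_def)
    next
      case False
      then show ?thesis
        unfolding slice if_not_P[OF False] by simp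
    qed
  qed
  finally show ?thesis
    by (simp add: A_def k_eq)
qed

lemma emeasure_positive_simplex_share_le:
  fixes k j :: nat
  assumes "k \<ge> 2" "j < k" "0 \<le> y" "y \<le> 1"
  defines "a \<equiv> 1 / (real k - 1)"
  shows "emeasure (PiM {..<k} (\<lambda>_. powr_measure a)) {x \<in> positive_simplex k. x j \<le> y * (\<Sum>i<k. x i)}
           = ennreal (Gamma a ^ (k - 1) / (a * (a + 1)) * y powr a)"
proof -
  define I where "I = {..<k} - {j}"
  define G where "G s = (\<integral>\<^sup>+u. ennreal (indicator {0<..} u * u powr (a - 1)) *
               indicator {u. u + s \<le> 1 \<and> u \<le> y * (u + s)} u \<partial>lborel)" for s
  have "finite I"
    by (simp add: I_def)
  have card_I: "card I = k - 1"
    using \<open>j < k\<close> by (simp add: I_def)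
  then have "I \<noteq> {}" and card_a: "real (card I) * a = 1"
    using \<open>k \<ge> 2\<close> by (auto simp: a_def)
  have "a > 0"
    using \<open>k \<ge> 2\<close> by (simp add: a_def)
  have [measurable]: "G \<in> borel_measurable borel"
    unfolding G_def by measurable
  have "emeasure (PiM {..<k} (\<lambda>_. powr_measure a)) {x \<in> positive_simplex k. x j \<le> y * (\<Sum>i<k. x i)}
      = (\<integral>\<^sup>+r. (if \<forall>i\<in>I. 0 < r i then G (\<Sum>i\<in>I. r i) else 0) \<partial>PiM I (\<lambda>_. powr_measure a))"
    unfolding I_def G_def by (rule emeasure_positive_simplex_share_le_split[OF \<open>j < k\<close>])
  \<comment> \<open>Since \<open>card I * a = 1\<close>, the sum of the other coordinates has constant density.\<close>
  also have "\<dots> = ennreal (Gamma a ^ card I / Gamma 1) *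
      (\<integral>\<^sup>+s. ennreal (indicator {0<..} s * s powr (1 - 1)) * G s \<partial>lborel)"
    using nn_integral_PiM_powr_measure_sum[OF \<open>a > 0\<close> \<open>finite I\<close> \<open>I \<noteq> {}\<close>, of G]
    unfolding card_a by simp
  also have "\<dots> = ennreal (Gamma a ^ (k - 1)) * (\<integral>\<^sup>+s. ennreal (indicator {0<..} s) * G s \<partial>lborel)"
    by (simp add: card_I)
       (auto intro!: arg_cong2[where f = "(*)"] nn_integral_cong simp: indicator_def)
  also have "\<dots> = ennreal (Gamma a ^ (k - 1) / (a * (a + 1)) * y powr a)"
    unfolding G_def nn_integral_powr_share_le[OF \<open>a > 0\<close> \<open>0 \<le> y\<close> \<open>y \<le> 1\<close>]
    using \<open>a > 0\<close> Gamma_real_pos[OF \<open>a > 0\<close>] by (simp add: ennreal_mult'[symmetric])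
  finally show ?thesis .
qed

lemma positive_simplex_component_bounds:
  assumes "x \<in> positive_simplex k" "j < k"
  shows "0 < x j" "x j \<le> (\<Sum>i<k. x i)" "0 < (\<Sum>i<k. x i)"
proof -
  have pos: "\<forall>i<k. 0 < x i"
    using assms(1) by (simp add: positive_simplex_def)
  then show "0 < x j"
    using assms(2) by simp
  show "x j \<le> (\<Sum>i<k. x i)"
    using pos assms(2) by (intro member_le_sum) (auto simp: less_imp_le)
  with \<open>0 < x j\<close> show "0 < (\<Sum>i<k. x i)"
    by linarith
qed

lemma positive_simplex_Collect_component_le_sum:
  assumes "j < k"
  shows "{x \<in> positive_simplex k. x j \<le> (\<Sum>i<k. x i)} = positive_simplex k"
  using positive_simplex_component_bounds(2)[OF _ assms] by auto

lemma emeasure_positive_simplex: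
  fixes k :: nat
  assumes "k \<ge> 2"
  defines "a \<equiv> 1 / (real k - 1)"
  shows "emeasure (PiM {..<k} (\<lambda>_. powr_measure a)) (positive_simplex k)
    = ennreal (Gamma a ^ (k - 1) / (a * (a + 1)))"
  using emeasure_positive_simplex_share_le[OF assms(1), of 0 1] assms(1)
  by (simp add: positive_simplex_Collect_component_le_sum a_def)

(* For a > 0 this is the Dirichlet(a, ..., a, 1) distribution of the first k coordinates. *)
definition simplex_measure :: "nat \<Rightarrow> real \<Rightarrow> (nat \<Rightarrow> real) measure" where
  "simplex_measure k a = uniform_measure (PiM {..<k} (\<lambda>_. powr_measure a)) (positive_simplex k)"

lemma sets_simplex_measure [measurable_cong]:
  "sets (simplex_measure k a) = sets (PiM {..<k} (\<lambda>_. borel))"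
  by (simp add: simplex_measure_def sets_PiM_powr_measure)

lemma space_simplex_measure:
  "space (simplex_measure k a) = space (PiM {..<k} (\<lambda>_. powr_measure a))"
  by (simp add: simplex_measure_def)

lemma AE_simplex_measure: "AE x in simplex_measure k a. x \<in> positive_simplex k"
  unfolding simplex_measure_def
  by (rule AE_uniform_measureI) (simp_all add: sets_PiM_powr_measure positive_simplex_in_sets)

lemma prob_space_simplex_measure:
  assumes "k \<ge> 2"
  shows "prob_space (simplex_measure k (1 / (real k - 1)))"
proof -
  define a where "a = 1 / (real k - 1)"
  define C where "C = Gamma a ^ (k - 1) / (a * (a + 1))"
  have "a > 0"
    using assms by (simp add: a_def)
  then have "C > 0"
    by (simp add: C_def)
  moreover have "emeasure (PiM {..<k} (\<lambda>_. powr_measure a)) (positive_simplex k) = ennreal C"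
    unfolding C_def a_def by (rule emeasure_positive_simplex[OF assms])
  ultimately show ?thesis
    unfolding simplex_measure_def a_def[symmetric] by (intro prob_space_uniform_measure) simp_all
qed

definition share :: "nat \<Rightarrow> nat \<Rightarrow> (nat \<Rightarrow> real) \<Rightarrow> real" where
  "share k j x = x j / (\<Sum>i<k. x i)"

lemma measurable_share [measurable]:
  "j < k \<Longrightarrow> share k j \<in> borel_measurable (PiM {..<k} (\<lambda>_. borel))"
  unfolding share_def by measurable

lemma sum_share:
  assumes "x \<in> positive_simplex k" "0 < k"
  shows "(\<Sum>j<k. share k j x) = 1"
  using positive_simplex_component_bounds(3)[OF assms]
  by (simp add: share_def flip: sum_divide_distrib)

lemma share_le_iff:
  assumes "x \<in> positive_simplex k" "j < k"
  shows "share k j x \<le> y \<longleftrightarrow> 0 \<le> y \<and> x j \<le> min y 1 * (\<Sum>i<k. x i)"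
proof -
  note bounds = positive_simplex_component_bounds[OF assms]
  have "0 \<le> y" if "x j \<le> y * (\<Sum>i<k. x i)"
  proof (rule ccontr)
    assume "\<not> 0 \<le> y"
    then have "y * (\<Sum>i<k. x i) < 0"
      using bounds(3) by (simp add: mult_neg_pos)
    with that bounds(1) show False
      by linarith
  qed
  moreover have "1 < y \<Longrightarrow> x j \<le> y * (\<Sum>i<k. x i)"
    using bounds mult_right_mono[of 1 y "\<Sum>i<k. x i"] by linarith
  ultimately show ?thesis
    using bounds by (auto simp: share_def divide_le_eq min_def not_less)
qed

lemma cdf_share:
  assumes "k \<ge> 2" "j < k"
  shows "cdf (distr (simplex_measure k (1 / (real k - 1))) borel (share k j)) y = Fk k 1 y"
proof -
  define a where "a = 1 / (real k - 1)"
  define \<nu> where "\<nu> = PiM {..<k} (\<lambda>_. powr_measure a)"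
  define C where "C = Gamma a ^ (k - 1) / (a * (a + 1))"
  have "a > 0"
    using \<open>k \<ge> 2\<close> by (simp add: a_def)
  then have "C > 0"
    by (simp add: C_def)
  have simplex: "emeasure \<nu> (positive_simplex k) = ennreal C"
    unfolding \<nu>_def C_def a_def by (rule emeasure_positive_simplex[OF \<open>k \<ge> 2\<close>])
  have share_le: "emeasure \<nu> {x \<in> positive_simplex k. x j \<le> min y 1 * (\<Sum>i<k. x i)}
      = ennreal (C * min y 1 powr a)" if "0 \<le> y"
    unfolding \<nu>_def C_def a_def using that
    by (intro emeasure_positive_simplex_share_le[OF \<open>k \<ge> 2\<close> \<open>j < k\<close>]) simp_all
  have "cdf (distr (simplex_measure k a) borel (share k j)) y
      = measure (simplex_measure k a) (share k j -` {..y} \<inter> space \<nu>)"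
    using \<open>j < k\<close> by (simp add: cdf_def measure_distr space_simplex_measure \<nu>_def)
  also have "\<dots> = measure \<nu> (positive_simplex k \<inter> (share k j -` {..y} \<inter> space \<nu>)) /
      measure \<nu> (positive_simplex k)"
    using simplex \<open>C > 0\<close> measurable_sets[OF measurable_share[OF \<open>j < k\<close>], of "{..y}"]
    unfolding simplex_measure_def \<nu>_def
    by (intro measure_uniform_measure) (simp_all add: sets_PiM_powr_measure space_PiM)
  also have "positive_simplex k \<inter> (share k j -` {..y} \<inter> space \<nu>)
      = (if y < 0 then {} else {x \<in> positive_simplex k. x j \<le> min y 1 * (\<Sum>i<k. x i)})"
  proof -
    have "positive_simplex k \<subseteq> space \<nu>"
      by (auto simp: positive_simplex_def \<nu>_def space_PiM)
    then show ?thesis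
      using share_le_iff[OF _ \<open>j < k\<close>] by auto
  qed
  also have "measure \<nu> (if y < 0 then {} else {x \<in> positive_simplex k. x j \<le> min y 1 * (\<Sum>i<k. x i)})
      = (if y < 0 then 0 else C * min y 1 powr a)"
    using share_le \<open>C > 0\<close> by (simp add: measure_def)
  also have "\<dots> / measure \<nu> (positive_simplex k) = Fk k 1 y"
    using simplex \<open>C > 0\<close> \<open>k \<ge> 2\<close> by (simp add: Fk_def measure_def a_def)
  finally show ?thesis
    by (simp add: a_def)
qed

lemma sum_lessThan_mult_mod:
  fixes f :: "nat \<Rightarrow> 'a::comm_semiring_1"
  shows "(\<Sum>i<k * m. f (i mod k)) = of_nat m * (\<Sum>j<k. f j)"
proof -
  have block: "(\<Sum>i\<in>{q * k..<q * k + k}. f (i mod k)) = (\<Sum>j<k. f j)" for q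
    using sum.shift_bounds_nat_ivl[of "\<lambda>i. f (i mod k)" 0 "q * k" k]
    by (simp add: atLeast0LessThan add.commute)
  have "(\<Sum>i<k * m. f (i mod k)) = (\<Sum>q<m. \<Sum>i\<in>{q * k..<q * k + k}. f (i mod k))"
    by (simp add: sum.nat_group mult.commute)
  then show ?thesis
    by (simp add: block)
qed

lemma cdf_distr_divide:
  fixes X :: "'a \<Rightarrow> real"
  assumes "X \<in> borel_measurable M" "c > 0"
  shows "cdf (distr M borel (\<lambda>\<omega>. X \<omega> / c)) t = cdf (distr M borel X) (c * t)"
  using assms by (simp add: cdf_def measure_distr vimage_def divide_le_eq mult.commute)

lemma Fk_scale:
  assumes "k > 0" "m > 0"
  shows "Fk k m t = Fk k 1 (real m * t)"
proof -
  have scale: "real k / real (k * m) = 1 / real m" "real (k * m) / real k = real m"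
    "real k / real (k * 1) = 1" "real (k * 1) / real k = 1"
    using assms by simp_all
  have "real m * t < 0 \<longleftrightarrow> t < 0" "t \<le> 1 / real m \<longleftrightarrow> real m * t \<le> 1"
    using assms by (simp_all add: mult_less_0_iff field_simps)
  then show ?thesis
    unfolding Fk_def scale by simp
qed

definition block_shares :: "nat \<Rightarrow> nat \<Rightarrow> (nat \<Rightarrow> real) \<Rightarrow> nat \<Rightarrow> real" where
  "block_shares k m x = (\<lambda>i\<in>{..<k * m}. share k (i mod k) x / real m)"

definition block_share_measure :: "nat \<Rightarrow> nat \<Rightarrow> (nat \<Rightarrow> real) measure" where
  "block_share_measure k m =
     distr (simplex_measure k (1 / (real k - 1))) (PiM {..<k * m} (\<lambda>_. borel)) (block_shares k m)"

lemma measurable_block_shares: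
  assumes "0 < k"
  shows "block_shares k m \<in> measurable (simplex_measure k a) (PiM {..<k * m} (\<lambda>_. borel))"
  unfolding block_shares_def using assms by (intro measurable_restrict) simp

lemma sum_block_shares:
  assumes "x \<in> positive_simplex k" "0 < k" "0 < m"
  shows "(\<Sum>i<k * m. block_shares k m x i) = 1"
  using sum_lessThan_mult_mod[of "\<lambda>j. share k j x / real m" k m] sum_share[OF assms(1,2)] \<open>0 < m\<close>
  by (simp add: block_shares_def flip: sum_divide_distrib)

lemma prob_space_block_share_measure:
  "k \<ge> 2 \<Longrightarrow> prob_space (block_share_measure k m)"
  unfolding block_share_measure_def
  by (intro prob_space.prob_space_distr prob_space_simplex_measure measurable_block_shares) simp_all

lemma AE_block_share_measure_sum:
  assumes "k \<ge> 2" "0 < m"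
  shows "AE b in block_share_measure k m. (\<Sum>i<k * m. b i) = 1"
proof -
  have "0 < k"
    using assms by simp
  have "AE x in simplex_measure k (1 / (real k - 1)). (\<Sum>i<k * m. block_shares k m x i) = 1"
    using AE_simplex_measure by eventually_elim (rule sum_block_shares[OF _ \<open>0 < k\<close> \<open>0 < m\<close>])
  then show ?thesis
    unfolding block_share_measure_def using measurable_block_shares[OF \<open>0 < k\<close>]
    by (subst AE_distr_iff) auto
qed

lemma cdf_block_share_measure:
  assumes "k \<ge> 2" "0 < m" "i < k * m"
  shows "cdf (distr (block_share_measure k m) borel (\<lambda>b. b i)) t = Fk k m t"
proof -
  define D where "D = simplex_measure k (1 / (real k - 1))"
  have "0 < k"
    using assms by simp
  have "distr (block_share_measure k m) borel (\<lambda>b. b i)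
      = distr D borel (\<lambda>x. share k (i mod k) x / real m)"
    unfolding block_share_measure_def D_def using measurable_block_shares[OF \<open>0 < k\<close>] \<open>i < k * m\<close>
    by (subst distr_distr) (auto intro!: distr_cong simp: block_shares_def)
  also have "cdf \<dots> t = cdf (distr D borel (share k (i mod k))) (real m * t)"
    using \<open>0 < k\<close> \<open>0 < m\<close> by (intro cdf_distr_divide) (simp_all add: D_def)
  also have "\<dots> = Fk k 1 (real m * t)"
    using \<open>0 < k\<close> by (simp add: D_def cdf_share[OF \<open>k \<ge> 2\<close>])
  also have "\<dots> = Fk k m t"
    using \<open>0 < k\<close> \<open>0 < m\<close> by (rule Fk_scale[symmetric])
  finally show ?thesis .
qed

theorem lemma3p4:
  fixes k m :: nat
  assumes "k \<ge> 2" and "m \<ge> 1"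
  shows "\<exists>M. prob_space M \<and>
           sets M = sets (PiM {..<k * m} (\<lambda>_. (borel :: real measure))) \<and>
           (AE b in M. (\<Sum>i<k * m. b i) = 1) \<and>
           (\<forall>i<k * m. \<forall>x. cdf (distr M borel (\<lambda>b. b i)) x = Fk k m x)"
proof (intro exI[of _ "block_share_measure k m"] conjI allI impI)
  have "0 < m"
    using \<open>m \<ge> 1\<close> by simp
  show "prob_space (block_share_measure k m)"
    using \<open>k \<ge> 2\<close> by (rule prob_space_block_share_measure)
  show "sets (block_share_measure k m) = sets (PiM {..<k * m} (\<lambda>_. borel))"
    by (simp add: block_share_measure_def)
  show "AE b in block_share_measure k m. (\<Sum>i<k * m. b i) = 1"
    using \<open>k \<ge> 2\<close> \<open>0 < m\<close> by (rule AE_block_share_measure_sum)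
  show "cdf (distr (block_share_measure k m) borel (\<lambda>b. b i)) x = Fk k m x" if "i < k * m" for i x
    using \<open>k \<ge> 2\<close> \<open>0 < m\<close> that by (rule cdf_block_share_measure)
qed

end
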